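(* Let $G$, $k\ge 3$, the choice strings $c_{i,j}$, the template string $t$, $L$ and $d$ be as in the binary construction in the context, and let $s\in\{0,1\}^L$ be a solution, i.e. $t$ and every choice string $c_{i,j}$ ($1\le i<j\le k$) have a substring of length $L$ (a match) at Hamming distance at most $d$ from $s$. Then $s$ and all its matches in $t$ and in the choice strings start with $\mathrm{front\_tag}$.
   Context: Let $G=(V,E)$ be an undirected simple graph with $V=\{v_1,\dots,v_n\}$ and edge set $E=\{e_1,\dots,e_m\}$, and let $k\ge 3$ be an integer; put $N=\binom{k}{2}$ and $b=nk-2k+2$. All strings are over $\{0,1\}$. For $1\le p\le n$ let $\mathrm{number}(p)=0^{p-1}10^{n-p}$. Let $\mathrm{front\_tag}=(1^{3nk}0)^{nk}$ (length $(3nk+1)nk$). Order the pairs $(i,j)$, $1\le i<j\le k$, lexicographically and let $i'$ be the position of $(i,j)$ in this order. For an edge $e$ joining $v_r,v_s$ with $r<s$ let $\mathrm{encode}(i,j,e)=(0^n)^{i-1}\,\mathrm{number}(r)\,(0^n)^{j-i-1}\,\mathrm{number}(s)\,(0^n)^{k-j}$, $\mathrm{back\_tag}(i')=0^{(i'-1)b}1^{b}0^{(N-i')b}$, and $\mathrm{block}(i,j,e)=\mathrm{front\_tag}\,\mathrm{encode}(i,j,e)\,\mathrm{back\_tag}(i')$. The choice string is $c_{i,j}=\mathrm{block}(i,j,e_1)\cdots\mathrm{block}(i,j,e_m)$. The template string is $t=\mathrm{front\_tag}\,1^{nk}\,0^{Nb}$. Set $L=(3nk+1)nk+nk+Nb$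 and $d=nk-k$. *)

theory Defs
  imports Main "HOL-Library.Sublist"
begin

text \<open>Binary strings are bool lists (True = 1, False = 0).
  The graph has vertices 1..n; its edges are given by a duplicate-free list E of
  pairs (r,s) with 1 \<le> r < s \<le> n, giving the enumeration e_1,...,e_m.\<close>

definition zeros :: "nat \<Rightarrow> bool list" where
  "zeros l = replicate l False"

definition ones :: "nat \<Rightarrow> bool list" where
  "ones l = replicate l True"

definition number :: "nat \<Rightarrow> nat \<Rightarrow> bool list" where
  "number n p = zeros (p - 1) @ [True] @ zeros (n - p)"

definition front_tag :: "nat \<Rightarrow> nat \<Rightarrow> bool list" where
  "front_tag n k = concat (replicate (n * k) (ones (3 * n * k) @ [False]))"

definition Nval :: "nat \<Rightarrow> nat" where
  "Nval k = k choose 2"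

definition bval :: "nat \<Rightarrow> nat \<Rightarrow> nat" where
  "bval n k = n * k + 2 - 2 * k"

text \<open>Position of the pair (i,j) in the lexicographic order of pairs (a,b), 1 \<le> a < b \<le> k.\<close>
definition pair_index :: "nat \<Rightarrow> nat \<Rightarrow> nat \<Rightarrow> nat" where
  "pair_index k i j = card {(a, b). 1 \<le> a \<and> a < b \<and> b \<le> k \<and> (a < i \<or> (a = i \<and> b \<le> j))}"

definition encode :: "nat \<Rightarrow> nat \<Rightarrow> nat \<Rightarrow> nat \<Rightarrow> nat \<times> nat \<Rightarrow> bool list" where
  "encode n k i j e = (case e of (r, s) \<Rightarrow>
     concat (replicate (i - 1) (zeros n)) @ number n r @
     concat (replicate (j - i - 1) (zeros n)) @ number n s @
     concat (replicate (k - j) (zeros n)))"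

definition back_tag :: "nat \<Rightarrow> nat \<Rightarrow> nat \<Rightarrow> bool list" where
  "back_tag n k i' = zeros ((i' - 1) * bval n k) @ ones (bval n k) @ zeros ((Nval k - i') * bval n k)"

definition block :: "nat \<Rightarrow> nat \<Rightarrow> nat \<Rightarrow> nat \<Rightarrow> nat \<times> nat \<Rightarrow> bool list" where
  "block n k i j e = front_tag n k @ encode n k i j e @ back_tag n k (pair_index k i j)"

definition choice :: "nat \<Rightarrow> nat \<Rightarrow> (nat \<times> nat) list \<Rightarrow> nat \<Rightarrow> nat \<Rightarrow> bool list" where
  "choice n k E i j = concat (map (block n k i j) E)"

definition template :: "nat \<Rightarrow> nat \<Rightarrow> bool list" where
  "template n k = front_tag n k @ ones (n * k) @ zeros (Nval k * bval n k)"

definition Lval :: "nat \<Rightarrow> nat \<Rightarrow> nat" where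
  "Lval n k = (3 * n * k + 1) * n * k + n * k + Nval k * bval n k"

definition dval :: "nat \<Rightarrow> nat \<Rightarrow> nat" where
  "dval n k = n * k - k"

definition hamming :: "bool list \<Rightarrow> bool list \<Rightarrow> nat" where
  "hamming x y = card {p. p < length x \<and> x ! p \<noteq> y ! p}"

definition substrs :: "nat \<Rightarrow> bool list \<Rightarrow> bool list set" where
  "substrs l c = {take l (drop p c) | p. p + l \<le> length c}"

end

theory Submission
  imports Defs
begin

text \<open>
  A solution s lies within d of the template t, so every match w of a choice string lies
  within 2d of t. The front tag consists of nk periods 1^{3nk} 0. If w started inside a block
  instead of at a block boundary, the part of w facing the front tag of t would be made of a
  shifted copy of the tag, which disagrees with the tag twice in every period, and of a block
  tail with only b + 2 ones, which disagrees with it almost everywhere; either way there are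
  more than 2d mismatches. Hence w is a whole block and starts with the front tag. Finally t
  and a block differ in exactly 2d positions, none of them in the front tag, so s, being
  within d of both, agrees with both on the front tag.
\<close>

section \<open>Strings and Hamming distance\<close>

lemma length_concat_equal_length:
  "\<forall>xs \<in> set xss. length xs = L \<Longrightarrow> length (concat xss) = length xss * L"
  by (induction xss) auto

lemma nth_concat_equal_length:
  assumes "\<forall>xs \<in> set xss. length xs = L" "q < length xss" "y < L"
  shows "concat xss ! (q * L + y) = xss ! q ! y"
  using assms
proof (induction xss arbitrary: q)
  case Nil
  then show ?case by simp
next
  case (Cons xs xss)
  then show ?case by (cases q) (auto simp: nth_append)
qed

lemma less_length_if_concat_equal_length:
  assumes "\<forall>xs \<in> set xss. length xs = L" "q * L < length (concat xss)"
  shows "q < length xss"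
  using assms(2) length_concat_equal_length[OF assms(1)] by simp

lemma nth_concat_common_prefix:
  assumes len: "\<forall>xs \<in> set xss. length xs = L" and pre: "\<forall>xs \<in> set xss. \<forall>y < F. xs ! y = f y"
    and "q * L + y < length (concat xss)" "y < F" "F \<le> L"
  shows "concat xss ! (q * L + y) = f y"
proof -
  have q: "q < length xss"
    using assms(3) by (intro less_length_if_concat_equal_length[OF len]) simp
  have "concat xss ! (q * L + y) = xss ! q ! y"
    using assms(4,5) by (intro nth_concat_equal_length[OF len q]) simp
  also have "\<dots> = f y" using pre nth_mem[OF q] assms(4) by blast
  finally show ?thesis .
qed

lemma take_drop_concat_equal_length:
  assumes "\<forall>xs \<in> set xss. length xs = L" "q < length xss"
  shows "take L (drop (q * L) (concat xss)) = xss ! q"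
  using assms
proof (induction xss arbitrary: q)
  case Nil
  then show ?case by simp
next
  case (Cons xs xss)
  then show ?case by (cases q) auto
qed

lemma Collect_less_add_split:
  "{p::nat. p < m + l \<and> P p} = {p. p < m \<and> P p} \<union> (\<lambda>p. m + p) ` {p. p < l \<and> P (m + p)}"
proof (intro set_eqI iffI)
  fix p assume "p \<in> {p. p < m + l \<and> P p}"
  then show "p \<in> {p. p < m \<and> P p} \<union> (\<lambda>p. m + p) ` {p. p < l \<and> P (m + p)}"
    by (cases "p < m") (auto intro!: image_eqI[of p _ "p - m"])
qed auto

lemma card_nth_append_right:
  "card {y. length xs \<le> y \<and> y < length (xs @ ys) \<and> (xs @ ys) ! y} = length (filter id ys)"
proof -
  have "{y. length xs \<le> y \<and> y < length (xs @ ys) \<and> (xs @ ys) ! y}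
      = (\<lambda>i. length xs + i) ` {i. i < length ys \<and> ys ! i}"
  proof (intro set_eqI iffI)
    fix y assume "y \<in> {y. length xs \<le> y \<and> y < length (xs @ ys) \<and> (xs @ ys) ! y}"
    then show "y \<in> (\<lambda>i. length xs + i) ` {i. i < length ys \<and> ys ! i}"
      by (auto simp: nth_append intro!: image_eqI[of y _ "y - length xs"])
  qed (auto simp: nth_append)
  then show ?thesis by (simp add: card_image length_filter_conv_card)
qed

lemma card_Int_disjoint_le:
  assumes "finite S" "A \<inter> B = {}" "A \<inter> C = {}" "B \<inter> C = {}"
  shows "card (S \<inter> A) + card (S \<inter> B) + card (S \<inter> C) \<le> card S"
proof -
  have "card (S \<inter> A \<union> S \<inter> B \<union> S \<inter> C) = card (S \<inter> A) + card (S \<inter> B) + card (S \<inter> C)"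
    using assms
    by (simp add: card_Un_disjoint Int_Un_distrib2 Int_assoc Int_left_commute inf.absorb2)
  moreover have "card (S \<inter> A \<union> S \<inter> B \<union> S \<inter> C) \<le> card S"
    using assms(1) by (intro card_mono) auto
  ultimately show ?thesis by simp
qed

lemma prefix_nthI:
  assumes "length xs \<le> length ys" "\<And>i. i < length xs \<Longrightarrow> ys ! i = xs ! i"
  shows "prefix xs ys"
proof -
  have "take (length xs) ys = xs" using assms by (intro nth_equalityI) auto
  then show ?thesis by (metis take_is_prefix)
qed

lemma substrs_length_self: "substrs (length c) c = {c}"
  unfolding substrs_def by auto

lemma length_substrs: "w \<in> substrs l c \<Longrightarrow> length w = l"
  unfolding substrs_def by auto

lemma hamming_self: "hamming xs xs = 0"
  unfolding hamming_def by simp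

lemma hamming_sym: "length x = length y \<Longrightarrow> hamming x y = hamming y x"
  unfolding hamming_def by metis

lemma hamming_append:
  assumes "length a = length c"
  shows "hamming (a @ b) (c @ d) = hamming a c + hamming b d"
proof -
  let ?A = "{p. p < length a \<and> a ! p \<noteq> c ! p}"
  let ?B = "{p. p < length b \<and> b ! p \<noteq> d ! p}"
  have "{p. p < length (a @ b) \<and> (a @ b) ! p \<noteq> (c @ d) ! p} = ?A \<union> (\<lambda>p. length a + p) ` ?B"
    using assms by (auto simp: Collect_less_add_split nth_append)
  moreover have "?A \<inter> (\<lambda>p. length a + p) ` ?B = {}" by auto
  ultimately show ?thesis unfolding hamming_def by (simp add: card_Un_disjoint card_image)
qed

lemma hamming_replicate_False:
  "length xs = m \<Longrightarrow> hamming (replicate m False) xs = length (filter id xs)"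
  unfolding hamming_def by (auto simp: length_filter_conv_card intro: arg_cong[where f = card])

lemma hamming_replicate_True:
  "length xs = m \<Longrightarrow> hamming (replicate m True) xs = m - length (filter id xs)"
proof -
  assume "length xs = m"
  then have "hamming (replicate m True) xs = length (filter Not xs)"
    unfolding hamming_def by (auto simp: length_filter_conv_card intro: arg_cong[where f = card])
  moreover have "length (filter id xs) + length (filter (\<lambda>x. \<not> id x) xs) = length xs"
    by (rule sum_length_filter_compl)
  ultimately show ?thesis using \<open>length xs = m\<close> by simp
qed

lemma card_mismatches_le_hamming:
  "m \<le> length x \<Longrightarrow> card {p. p < m \<and> x ! p \<noteq> y ! p} \<le> hamming x y"
  unfolding hamming_def by (rule card_mono) auto

lemma hamming_triangle_excess:
  assumes "length a = length b" "length b = length c"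
  shows "hamming a c + 2 * card {p. p < length a \<and> a ! p = c ! p \<and> b ! p \<noteq> a ! p}
         \<le> hamming a b + hamming b c"
proof -
  let ?A = "{p. p < length a \<and> a ! p \<noteq> b ! p}"
  let ?B = "{p. p < length b \<and> b ! p \<noteq> c ! p}"
  let ?C = "{p. p < length a \<and> a ! p \<noteq> c ! p}"
  let ?X = "{p. p < length a \<and> a ! p = c ! p \<and> b ! p \<noteq> a ! p}"
  have "card (?A \<union> ?B) + card (?A \<inter> ?B) = card ?A + card ?B"
    using card_Un_Int[of ?A ?B] by simp
  moreover have "card ?C + card ?X \<le> card (?A \<union> ?B)"
    using assms by (subst card_Un_disjoint[symmetric]) (auto intro!: card_mono)
  moreover have "card ?X \<le> card (?A \<inter> ?B)"
    using assms by (intro card_mono) auto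
  ultimately show ?thesis unfolding hamming_def by linarith
qed

lemma hamming_triangle:
  "length a = length b \<Longrightarrow> length b = length c \<Longrightarrow> hamming a c \<le> hamming a b + hamming b c"
  using hamming_triangle_excess by fastforce

lemma hamming_between_agrees:
  assumes "length a = length b" "length b = length c"
    and "hamming a b + hamming b c \<le> hamming a c"
    and "p < length a" "a ! p = c ! p"
  shows "b ! p = a ! p"
proof -
  let ?X = "{p. p < length a \<and> a ! p = c ! p \<and> b ! p \<noteq> a ! p}"
  have "card ?X = 0" using hamming_triangle_excess[OF assms(1,2)] assms(3) by linarith
  then have "p \<notin> ?X" by simp
  then show ?thesis using assms(4,5) by blast
qed

section \<open>Mismatches against a periodic tag\<close>

text \<open>The infinite word (1^{M-1} 0)^omega; the front tag is its prefix of length nk(3nk + 1).\<close>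

definition tag_bit :: "nat \<Rightarrow> nat \<Rightarrow> bool" where
  "tag_bit M x \<longleftrightarrow> x mod M \<noteq> M - 1"

lemma card_residue_lower:
  assumes "0 < M" "c < M"
  shows "l div M \<le> card {x. x < l \<and> (x + d) mod M = c}"
proof -
  define r where "r = (c + M - d mod M) mod M"
  have "(i * M + r + d) mod M = c" for i
  proof -
    have "(i * M + r + d) mod M = (r + d) mod M"
      by (simp add: add.assoc)
    also have "\<dots> = (c + M - d mod M + d) mod M"
      unfolding r_def by (simp add: mod_add_left_eq)
    also have "\<dots> = (c + M - d mod M + d mod M) mod M"
      by (simp add: mod_add_right_eq)
    also have "c + M - d mod M + d mod M = c + M"
      using mod_less_divisor[OF assms(1), of d] by linarith
    finally show ?thesis using assms(2) by simp
  qed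
  moreover have "i * M + r < l" if "i < l div M" for i
  proof -
    have "i * M + r < (i + 1) * M" using assms unfolding r_def by simp
    also have "\<dots> \<le> l div M * M" using that by (intro mult_right_mono) auto
    finally show ?thesis by (meson div_times_less_eq_dividend order_less_le_trans)
  qed
  ultimately have sub: "(\<lambda>i. i * M + r) ` {..< l div M} \<subseteq> {x. x < l \<and> (x + d) mod M = c}"
    by auto
  have "inj_on (\<lambda>i. i * M + r) {..< l div M}"
    using assms by (auto simp: inj_on_def)
  then have "l div M = card ((\<lambda>i. i * M + r) ` {..< l div M})"
    by (simp add: card_image)
  also have "\<dots> \<le> card {x. x < l \<and> (x + d) mod M = c}"
    using sub by (intro card_mono) auto
  finally show ?thesis .
qed

lemma card_residue_upper:
  assumes "0 < M"
  shows "card {x. a \<le> x \<and> x < a + l \<and> x mod M = c} \<le> l div M + 1"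
proof -
  let ?S = "{x. a \<le> x \<and> x < a + l \<and> x mod M = c}"
  have "inj_on (\<lambda>x. (x - a) div M) ?S"
  proof (rule inj_onI)
    fix x y assume x: "x \<in> ?S" and y: "y \<in> ?S" and div_eq: "(x - a) div M = (y - a) div M"
    have "x mod M = y mod M" "a \<le> x" "a \<le> y" using x y by auto
    then have "(x - a) mod M = (y - a) mod M"
      by (metis Nat.diff_diff_eq le_diff_iff linorder_le_cases mod_eq_dvd_iff_nat)
    then have "x - a = y - a" using div_eq by (metis div_mult_mod_eq)
    then show "x = y" using x y by (simp add: eq_diff_iff)
  qed
  moreover have "(\<lambda>x. (x - a) div M) ` ?S \<subseteq> {..l div M}"
    by (auto intro: div_le_mono)
  ultimately have "card ?S \<le> card {..l div M}"
    by (meson card_inj_on_le finite_atMost)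
  then show ?thesis by simp
qed

lemma card_tag_bit_shift_mismatch:
  assumes "0 < M" "d mod M \<noteq> 0"
  shows "2 * (l div M) \<le> card {x. x < l \<and> tag_bit M (x + d) \<noteq> tag_bit M x}"
proof -
  let ?Z0 = "{x. x < l \<and> x mod M = M - 1}"
  let ?Zd = "{x. x < l \<and> (x + d) mod M = M - 1}"
  have "x \<notin> ?Zd" if "x \<in> ?Z0" for x
  proof -
    have "(x + d) mod M \<noteq> x mod M"
      using assms(2) mod_eq_dvd_iff_nat[of x "x + d" M] by auto
    then show ?thesis using that by simp
  qed
  then have "?Z0 \<inter> ?Zd = {}" by blast
  moreover have "?Z0 \<union> ?Zd \<subseteq> {x. x < l \<and> tag_bit M (x + d) \<noteq> tag_bit M x}"
    using calculation by (auto simp: tag_bit_def)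
  ultimately have "card ?Z0 + card ?Zd \<le> card {x. x < l \<and> tag_bit M (x + d) \<noteq> tag_bit M x}"
    by (simp add: card_mono flip: card_Un_disjoint)
  then show ?thesis
    using card_residue_lower[OF assms(1), of "M - 1" l 0]
      card_residue_lower[OF assms(1), of "M - 1" l d]
      assms(1) by simp
qed

lemma card_mismatch_sparse_interval:
  assumes "0 < M" "card {x. a \<le> x \<and> x < a + t \<and> h x} \<le> B"
  shows "t \<le> card {x. a \<le> x \<and> x < a + t \<and> h x \<noteq> tag_bit M x} + B + (t div M + 1)"
proof -
  let ?mis = "{x. a \<le> x \<and> x < a + t \<and> h x \<noteq> tag_bit M x}"
    and ?ones = "{x. a \<le> x \<and> x < a + t \<and> h x}"
    and ?zeros = "{x. a \<le> x \<and> x < a + t \<and> x mod M = M - 1}"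
  have "{a..<a + t} \<subseteq> ?mis \<union> ?ones \<union> ?zeros" by (auto simp: tag_bit_def)
  then have "card {a..<a + t} \<le> card (?mis \<union> ?ones \<union> ?zeros)"
    by (intro card_mono) auto
  also have "\<dots> \<le> card ?mis + card ?ones + card ?zeros"
    using card_Un_le[of "?mis \<union> ?ones" ?zeros] card_Un_le[of ?mis ?ones] by linarith
  finally show ?thesis using assms(2) card_residue_upper[OF assms(1), of a t "M - 1"] by simp
qed

text \<open>
  Either the tail part is at least one period long, and its mismatches alone suffice, or the
  shifted part covers all but less than one period of the tag.
\<close>

lemma tail_or_shift_mismatch_bound:
  fixes K M B D a t m1 m2 :: nat
  assumes M: "M = 3 * K + 1"
    and "B + D + 1 \<le> 3 * K" "D + 2 \<le> 2 * K"
    and "a + t = K * M"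
    and tail: "t \<le> m2 + B + t div M + 1"
    and shift: "t < M \<Longrightarrow> 2 * (a div M) \<le> m1"
  shows "D \<le> m1 + m2"
proof (cases "M \<le> t")
  case True
  then have "1 \<le> t div M"
    using div_le_mono[of M t M] M by simp
  then have "K \<le> K * (t div M)" by simp
  moreover have "t div M * M = 3 * (K * (t div M)) + t div M"
    unfolding M by (simp add: algebra_simps)
  moreover have "t div M * M \<le> t" by (rule div_times_less_eq_dividend)
  ultimately show ?thesis using tail assms(2) by linarith
next
  case False
  from assms(3) obtain K' where K': "K = Suc K'" by (cases K) auto
  then have "K' * M \<le> a"
    using False assms(4) by simp
  then have "K' \<le> a div M"
    using M by (simp add: less_eq_div_iff_mult_less_eq)
  then show ?thesis using shift False assms(3) K' by linarith
qed

text \<open>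
  In a window starting \<rho> symbols into a block of length L = K M + T, the first K M symbols
  consist of the rest of the tag of this block (length K M - \<rho>, possibly empty), a part of the
  tail of this block (length t) and the beginning of the tag of the next block.
\<close>

lemma misaligned_mismatch_arith:
  fixes K M T L B D \<rho> mA mB mC :: nat
  defines "t \<equiv> min (K * M) (L - \<rho>) - (K * M - \<rho>)"
  assumes M: "M = 3 * K + 1" and L: "L = K * M + T"
    and bounds: "B + D + 1 \<le> 3 * K" "D + 2 \<le> 2 * K" "B + D + 1 + T div M \<le> T"
    and \<rho>: "0 < \<rho>" "\<rho> < L"
    and tail: "t \<le> mB + B + (t div M + 1)"
    and cur: "\<rho> mod M \<noteq> 0 \<Longrightarrow> 2 * ((K * M - \<rho>) div M) \<le> mA"
    and nxt: "(L - \<rho>) mod M \<noteq> 0 \<Longrightarrow> 2 * ((K * M - (L - \<rho>)) div M) \<le> mC"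
  shows "D \<le> mA + mB + mC"
proof -
  consider (both) "\<rho> < K * M" "L - \<rho> < K * M" | (cur_only) "\<rho> < K * M" "K * M \<le> L - \<rho>"
    | (nxt_only) "K * M \<le> \<rho>" "L - \<rho> < K * M" | (neither) "K * M \<le> \<rho>" "K * M \<le> L - \<rho>"
    by linarith
  then show ?thesis
  proof cases
    case both
    then have "t = T" unfolding t_def L by simp
    then show ?thesis using tail bounds(3) by simp
  next
    case cur_only
    then have "t = \<rho>" unfolding t_def by simp
    have "D \<le> mA + mB"
    proof (rule tail_or_shift_mismatch_bound[OF M bounds(1,2)])
      show "K * M - \<rho> + \<rho> = K * M" using cur_only by simp
      show "\<rho> \<le> mB + B + \<rho> div M + 1" using tail \<open>t = \<rho>\<close> by simp
      show "2 * ((K * M - \<rho>) div M) \<le> mA" if "\<rho> < M" using cur \<rho>(1) that by simp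
    qed
    then show ?thesis by linarith
  next
    case nxt_only
    then have "t = L - \<rho>" unfolding t_def by simp
    have "D \<le> mC + mB"
    proof (rule tail_or_shift_mismatch_bound[OF M bounds(1,2)])
      show "K * M - (L - \<rho>) + (L - \<rho>) = K * M" using nxt_only by simp
      show "L - \<rho> \<le> mB + B + (L - \<rho>) div M + 1" using tail \<open>t = L - \<rho>\<close> by simp
      show "2 * ((K * M - (L - \<rho>)) div M) \<le> mC" if "L - \<rho> < M" using nxt \<rho>(2) that by simp
    qed
    then show ?thesis by linarith
  next
    case neither
    then have "t = K * M" unfolding t_def by simp
    have "D \<le> 0 + mB"
      by (rule tail_or_shift_mismatch_bound[OF M bounds(1,2), of 0 "K * M"])
        (use tail \<open>t = K * M\<close> in simp_all)
    then show ?thesis by linarith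
  qed
qed

lemma misaligned_window_mismatches:
  fixes h :: "nat \<Rightarrow> bool" and K M T L B D \<rho> :: nat
  assumes M: "M = 3 * K + 1" and L: "L = K * M + T"
    and bounds: "B + D + 1 \<le> 3 * K" "D + 2 \<le> 2 * K" "B + D + 1 + T div M \<le> T"
    and \<rho>: "0 < \<rho>" "\<rho> < L"
    and cur: "\<And>x. \<rho> + x < K * M \<Longrightarrow> h x = tag_bit M (\<rho> + x)"
    and nxt: "\<And>x. L \<le> \<rho> + x \<Longrightarrow> x < K * M \<Longrightarrow> h x = tag_bit M (\<rho> + x - L)"
    and tail: "card {x. K * M \<le> \<rho> + x \<and> \<rho> + x < L \<and> h x} \<le> B"
  shows "D \<le> card {x. x < K * M \<and> h x \<noteq> tag_bit M x}"
proof -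
  define F where "F = K * M"
  define Mis where "Mis = {x. x < F \<and> h x \<noteq> tag_bit M x}"
  define t where "t = min F (L - \<rho>) - (F - \<rho>)"
  let ?A = "{..<F - \<rho>}" and ?B = "{F - \<rho>..<F - \<rho> + t}" and ?C = "{L - \<rho>..<F}"
  have "0 < M" using M by simp
  have FL: "F \<le> L" unfolding F_def L by simp
  have "card (Mis \<inter> ?A) + card (Mis \<inter> ?B) + card (Mis \<inter> ?C) \<le> card Mis"
    using FL by (intro card_Int_disjoint_le) (auto simp: Mis_def t_def)
  moreover have "D \<le> card (Mis \<inter> ?A) + card (Mis \<inter> ?B) + card (Mis \<inter> ?C)"
  proof (rule misaligned_mismatch_arith[OF M L bounds \<rho>])
    have "finite {x. K * M \<le> \<rho> + x \<and> \<rho> + x < L \<and> h x}"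
      by (rule finite_subset[of _ "{..<L}"]) auto
    moreover have "{x. F - \<rho> \<le> x \<and> x < F - \<rho> + t \<and> h x} \<subseteq> {x. K * M \<le> \<rho> + x \<and> \<rho> + x < L \<and> h x}"
      unfolding F_def t_def by auto
    ultimately have "card {x. F - \<rho> \<le> x \<and> x < F - \<rho> + t \<and> h x} \<le> B"
      using tail by (meson card_mono le_trans)
    then have "t \<le> card {x. F - \<rho> \<le> x \<and> x < F - \<rho> + t \<and> h x \<noteq> tag_bit M x} + B + (t div M + 1)"
      by (rule card_mismatch_sparse_interval[OF \<open>0 < M\<close>])
    moreover have "{x. F - \<rho> \<le> x \<and> x < F - \<rho> + t \<and> h x \<noteq> tag_bit M x} = Mis \<inter> ?B"
      unfolding Mis_def t_def by auto
    ultimately have "t \<le> card (Mis \<inter> ?B) + B + (t div M + 1)" by simp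
    then show "min (K * M) (L - \<rho>) - (K * M - \<rho>)
        \<le> card (Mis \<inter> ?B) + B + ((min (K * M) (L - \<rho>) - (K * M - \<rho>)) div M + 1)"
      unfolding t_def F_def .
    show "2 * ((K * M - \<rho>) div M) \<le> card (Mis \<inter> ?A)" if "\<rho> mod M \<noteq> 0"
    proof -
      have "{x. x < F - \<rho> \<and> tag_bit M (x + \<rho>) \<noteq> tag_bit M x} \<subseteq> Mis \<inter> ?A"
        unfolding Mis_def F_def using cur by (auto simp: add.commute)
      then show ?thesis
        using card_tag_bit_shift_mismatch[OF \<open>0 < M\<close> that, of "F - \<rho>"] unfolding F_def
        by (meson card_mono finite_Int finite_lessThan order_trans)
    qed
    show "2 * ((K * M - (L - \<rho>)) div M) \<le> card (Mis \<inter> ?C)" if "(L - \<rho>) mod M \<noteq> 0"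
    proof -
      let ?S = "{y. y < F - (L - \<rho>) \<and> tag_bit M (y + (L - \<rho>)) \<noteq> tag_bit M y}"
      have "(\<lambda>y. y + (L - \<rho>)) ` ?S \<subseteq> Mis \<inter> ?C"
        unfolding Mis_def F_def using nxt \<rho>(2) by auto
      then have "card ((\<lambda>y. y + (L - \<rho>)) ` ?S) \<le> card (Mis \<inter> ?C)"
        by (intro card_mono) auto
      then show ?thesis
        using card_tag_bit_shift_mismatch[OF \<open>0 < M\<close> that, of "F - (L - \<rho>)"] unfolding F_def
        by (simp add: card_image)
    qed
  qed
  ultimately show ?thesis unfolding Mis_def F_def by linarith
qed

lemma misaligned_substring_mismatches:
  fixes xss :: "bool list list" and K M T L B D p :: nat
  assumes M: "M = 3 * K + 1" and L: "L = K * M + T"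
    and bounds: "B + D + 1 \<le> 3 * K" "D + 2 \<le> 2 * K" "B + D + 1 + T div M \<le> T"
    and len: "\<forall>xs \<in> set xss. length xs = L"
    and tag: "\<forall>xs \<in> set xss. \<forall>y < K * M. xs ! y = tag_bit M y"
    and sparse: "\<forall>xs \<in> set xss. card {y. K * M \<le> y \<and> y < L \<and> xs ! y} \<le> B"
    and p: "p + L \<le> length (concat xss)" "p mod L \<noteq> 0"
  shows "D \<le> card {x. x < K * M \<and> concat xss ! (p + x) \<noteq> tag_bit M x}"
proof -
  define q \<rho> where "q = p div L" and "\<rho> = p mod L"
  have p_eq: "p = q * L + \<rho>" unfolding q_def \<rho>_def by simp
  have "0 < L" using L M bounds(2) by simp
  have "K * M \<le> L" using L by simp
  have in_range: "q * L + \<rho> + x < length (concat xss)" if "x < L" for x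
    using that p(1) p_eq by linarith
  have "D \<le> card {x. x < K * M \<and> concat xss ! (q * L + \<rho> + x) \<noteq> tag_bit M x}"
  proof (rule misaligned_window_mismatches[OF M L bounds])
    show "0 < \<rho>" "\<rho> < L" using p(2) \<open>0 < L\<close> unfolding \<rho>_def by simp_all
    show "concat xss ! (q * L + \<rho> + x) = tag_bit M (\<rho> + x)" if "\<rho> + x < K * M" for x
      using nth_concat_common_prefix[OF len tag, of q "\<rho> + x"] in_range[of x] that \<open>K * M \<le> L\<close>
      by (simp add: add.assoc)
    show "concat xss ! (q * L + \<rho> + x) = tag_bit M (\<rho> + x - L)"
      if "L \<le> \<rho> + x" "x < K * M" for x
    proof -
      have "q * L + \<rho> + x = Suc q * L + (\<rho> + x - L)" using that(1) by simp
      moreover have "\<rho> + x - L < K * M" using that \<open>\<rho> < L\<close> by linarith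
      ultimately show ?thesis
        using nth_concat_common_prefix[OF len tag, of "Suc q" "\<rho> + x - L"] in_range[of x]
          that(2) \<open>K * M \<le> L\<close> by (simp add: add.assoc)
    qed
    show "card {x. K * M \<le> \<rho> + x \<and> \<rho> + x < L \<and> concat xss ! (q * L + \<rho> + x)} \<le> B"
    proof -
      let ?S = "{x. K * M \<le> \<rho> + x \<and> \<rho> + x < L \<and> concat xss ! (q * L + \<rho> + x)}"
      let ?T = "{y. K * M \<le> y \<and> y < L \<and> xss ! q ! y}"
      have "q < length xss"
        using in_range[of 0] \<open>0 < L\<close> by (intro less_length_if_concat_equal_length[OF len]) simp
      then have "(\<lambda>x. \<rho> + x) ` ?S \<subseteq> ?T"
        using nth_concat_equal_length[OF len] by (auto simp: add.assoc)
      then have "card ((\<lambda>x. \<rho> + x) ` ?S) \<le> card ?T" by (intro card_mono) auto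
      moreover have "card ?T \<le> B" using sparse \<open>q < length xss\<close> by simp
      ultimately show ?thesis by (simp add: card_image)
    qed
  qed
  then show ?thesis using p_eq by simp
qed

section \<open>The strings of the construction\<close>

lemma length_front_tag: "length (front_tag n k) = n * k * (3 * n * k + 1)"
  unfolding front_tag_def ones_def by (simp add: length_concat sum_list_replicate)

lemma nth_front_tag:
  assumes "x < length (front_tag n k)"
  shows "front_tag n k ! x = tag_bit (3 * n * k + 1) x"
proof -
  let ?M = "3 * n * k + 1" and ?period = "ones (3 * n * k) @ [False]"
  have len: "\<forall>xs \<in> set (replicate (n * k) ?period). length xs = ?M" by (simp add: ones_def)
  have "x div ?M < n * k" using assms by (simp add: length_front_tag div_less_iff_less_mult)
  then have "front_tag n k ! (x div ?M * ?M + x mod ?M) = ?period ! (x mod ?M)"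
    unfolding front_tag_def using nth_concat_equal_length[OF len] by simp
  also have "\<dots> = tag_bit ?M x"
  proof -
    have "x mod ?M < 3 * n * k \<or> x mod ?M = 3 * n * k" using mod_less_divisor[of ?M x] by linarith
    then show ?thesis by (auto simp: tag_bit_def ones_def nth_append)
  qed
  finally show ?thesis by (simp only: div_mult_mod_eq)
qed

lemma length_template: "length (template n k) = Lval n k"
  unfolding template_def Lval_def by (simp add: length_front_tag ones_def zeros_def algebra_simps)

lemma length_number: "1 \<le> r \<Longrightarrow> r \<le> n \<Longrightarrow> length (number n r) = n"
  unfolding number_def zeros_def by simp

lemma length_encode:
  assumes "1 \<le> i" "i < j" "j \<le> k" "1 \<le> r" "r < q" "q \<le> n"
  shows "length (encode n k i j (r, q)) = n * k"
proof -
  have "length (encode n k i j (r, q)) = (i - 1) * n + n + (j - i - 1) * n + n + (k - j) * n"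
    unfolding encode_def using assms
    by (simp add: length_concat sum_list_replicate zeros_def length_number)
  also have "\<dots> = ((i - 1) + 1 + (j - i - 1) + 1 + (k - j)) * n" by (simp add: algebra_simps)
  also have "(i - 1) + 1 + (j - i - 1) + 1 + (k - j) = k" using assms by simp
  finally show ?thesis by simp
qed

lemma count_encode: "length (filter id (encode n k i j e)) = 2"
  unfolding encode_def number_def by (cases e) (simp add: zeros_def filter_concat)

lemma card_increasing_pairs: "card {(a, b). 1 \<le> a \<and> a < b \<and> b \<le> k} = k choose 2"
proof (induction k)
  case 0
  have "{(a, b). 1 \<le> a \<and> a < b \<and> b \<le> (0::nat)} = {}" by auto
  then show ?case by (simp only: card.empty) simp
next
  case (Suc k)
  let ?P = "\<lambda>k::nat. {(a, b). 1 \<le> a \<and> a < b \<and> b \<le> k}" and ?new = "(\<lambda>a. (a, Suc k)) ` {1..k}"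
  have split: "?P (Suc k) = ?P k \<union> ?new" by (auto simp: le_Suc_eq)
  have "finite (?P k)" by (rule finite_subset[of _ "{1..k} \<times> {1..k}"]) auto
  then have "card (?P k \<union> ?new) = card (?P k) + card ?new"
    by (rule card_Un_disjoint) auto
  then have "card (?P (Suc k)) = card (?P k) + card ?new" by (simp only: split)
  moreover have "card ?new = k" by (simp add: card_image inj_on_def)
  ultimately show ?case using Suc.IH by (simp add: numeral_2_eq_2)
qed

lemma pair_index_bounds:
  assumes "1 \<le> i" "i < j" "j \<le> k"
  shows "1 \<le> pair_index k i j" "pair_index k i j \<le> Nval k"
proof -
  let ?S = "{(a, b). 1 \<le> a \<and> a < b \<and> b \<le> k \<and> (a < i \<or> (a = i \<and> b \<le> j))}"
  let ?P = "{(a, b). 1 \<le> a \<and> a < b \<and> b \<le> k}"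
  have "finite ?P" by (rule finite_subset[of _ "{1..k} \<times> {1..k}"]) auto
  moreover have "?S \<subseteq> ?P" by auto
  moreover have "(i, j) \<in> ?S" using assms by auto
  ultimately show "1 \<le> pair_index k i j" "pair_index k i j \<le> Nval k"
    unfolding pair_index_def Nval_def card_increasing_pairs[symmetric]
    by (auto simp: Suc_le_eq card_gt_0_iff intro: card_mono finite_subset)
qed

lemma length_back_tag:
  assumes "1 \<le> i'" "i' \<le> Nval k"
  shows "length (back_tag n k i') = Nval k * bval n k"
proof -
  have "length (back_tag n k i') = ((i' - 1) + 1 + (Nval k - i')) * bval n k"
    unfolding back_tag_def by (simp add: zeros_def ones_def algebra_simps)
  also have "(i' - 1) + 1 + (Nval k - i') = Nval k" using assms by simp
  finally show ?thesis .
qed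

lemma count_back_tag: "length (filter id (back_tag n k i')) = bval n k"
  unfolding back_tag_def by (simp add: zeros_def ones_def)

lemma length_block:
  assumes "1 \<le> i" "i < j" "j \<le> k" "1 \<le> r" "r < q" "q \<le> n"
  shows "length (block n k i j (r, q)) = Lval n k"
  unfolding block_def Lval_def
  using length_encode[OF assms] length_back_tag[OF pair_index_bounds[OF assms(1-3)]]
  by (simp add: length_front_tag algebra_simps)

lemma nth_block_front:
  "x < length (front_tag n k) \<Longrightarrow> block n k i j e ! x = tag_bit (3 * n * k + 1) x"
  unfolding block_def by (simp add: nth_append nth_front_tag)

lemma card_block_tail:
  "card {y. length (front_tag n k) \<le> y \<and> y < length (block n k i j e) \<and> block n k i j e ! y}
    = 2 + bval n k"
  unfolding block_def card_nth_append_right by (simp add: count_encode count_back_tag)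

lemma hamming_template_block:
  assumes "2 \<le> n" "1 \<le> i" "i < j" "j \<le> k" "1 \<le> r" "r < q" "q \<le> n"
  shows "hamming (template n k) (block n k i j (r, q)) = 2 * dval n k"
proof -
  note lengths = length_encode[OF assms(2-)] length_back_tag[OF pair_index_bounds[OF assms(2-4)]]
  have "hamming (template n k) (block n k i j (r, q))
      = hamming (ones (n * k)) (encode n k i j (r, q))
        + hamming (zeros (Nval k * bval n k)) (back_tag n k (pair_index k i j))"
    unfolding template_def block_def using lengths
    by (simp add: hamming_append ones_def hamming_self)
  also have "\<dots> = (n * k - 2) + bval n k"
    using lengths by (simp add: ones_def zeros_def hamming_replicate_True hamming_replicate_False
        count_encode count_back_tag)
  also have "\<dots> = 2 * dval n k"
  proof -
    have "2 * k \<le> n * k" "1 \<le> k" using assms by auto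
    then show ?thesis unfolding bval_def dval_def by arith
  qed
  finally show ?thesis .
qed

text \<open>
  The parameters of the misalignment lemma for the construction: K = nk, a block tail carries
  B = b + 2 ones, and D = 2d + 1 mismatches exceed the distance 2d between a match and t.
\<close>

lemma construction_bounds:
  fixes n k :: nat
  assumes "2 \<le> n" "3 \<le> k"
  shows "(2 + bval n k) + (2 * dval n k + 1) + 1 \<le> 3 * (n * k)"
    and "(2 * dval n k + 1) + 2 \<le> 2 * (n * k)"
    and "(2 + bval n k) + (2 * dval n k + 1) + 1 + (n * k + Nval k * bval n k) div (3 * (n * k) + 1)
      \<le> n * k + Nval k * bval n k"
proof -
  have nk: "2 * k \<le> n * k" using assms(1) by simp
  then have b: "bval n k + 2 * k = n * k + 2" and d: "dval n k + k = n * k"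
    unfolding bval_def dval_def by arith+
  then show "(2 + bval n k) + (2 * dval n k + 1) + 1 \<le> 3 * (n * k)"
    and "(2 * dval n k + 1) + 2 \<le> 2 * (n * k)"
    using assms(2) by linarith+
  have "3 * 2 \<le> k * (k - 1)" using assms(2) by (intro mult_le_mono) auto
  then have "3 \<le> Nval k" unfolding Nval_def choose_two by simp
  then obtain Z where Z: "Nval k * bval n k = Z + 1 + 2 * bval n k" "1 \<le> Z"
  proof -
    have "2 \<le> bval n k" using b nk by linarith
    then have "2 + 2 * bval n k \<le> Nval k * bval n k"
      using mult_le_mono1[OF \<open>3 \<le> Nval k\<close>, of "bval n k"] by linarith
    then show thesis using that[of "Nval k * bval n k - 1 - 2 * bval n k"] by simp
  qed
  have "n * k + 2 * bval n k + 1 < 3 * (n * k)" using b nk assms(2) by linarith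
  moreover have "3 * (n * k) \<le> 3 * (n * k) * Z" using Z(2) by simp
  moreover have "Z * (3 * (n * k) + 1) = 3 * (n * k) * Z + Z" by (simp add: algebra_simps)
  ultimately have "n * k + Nval k * bval n k < Z * (3 * (n * k) + 1)"
    using Z(1) by linarith
  then have "(n * k + Nval k * bval n k) div (3 * (n * k) + 1) < Z"
    by (simp add: div_less_iff_less_mult)
  then show "(2 + bval n k) + (2 * dval n k + 1) + 1
      + (n * k + Nval k * bval n k) div (3 * (n * k) + 1) \<le> n * k + Nval k * bval n k"
    using b d Z(1) by linarith
qed

section \<open>Matches of a solution\<close>

lemma length_choice_blocks:
  assumes "\<forall>(r, q) \<in> set E. 1 \<le> r \<and> r < q \<and> q \<le> n" "1 \<le> i" "i < j" "j \<le> k"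
  shows "\<forall>xs \<in> set (map (block n k i j) E). length xs = Lval n k"
  using assms length_block by fastforce

lemma misaligned_choice_substring_far:
  fixes E :: "(nat \<times> nat) list"
  assumes "2 \<le> n" "3 \<le> k"
    and len: "\<forall>xs \<in> set (map (block n k i j) E). length xs = Lval n k"
    and p: "p + Lval n k \<le> length (choice n k E i j)" "p mod Lval n k \<noteq> 0"
  shows "2 * dval n k < hamming (take (Lval n k) (drop p (choice n k E i j))) (template n k)"
proof -
  let ?blocks = "map (block n k i j) E" and ?L = "Lval n k"
    and ?w = "take (Lval n k) (drop p (choice n k E i j))" and ?F = "n * k * (3 * (n * k) + 1)" and ?M = "3 * (n * k) + 1"
  have tag: "\<forall>xs \<in> set ?blocks. \<forall>y < ?F. xs ! y = tag_bit ?M y"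
    using nth_block_front by (auto simp: length_front_tag mult.assoc)
  have sparse: "\<forall>xs \<in> set ?blocks. card {y. ?F \<le> y \<and> y < ?L \<and> xs ! y} \<le> 2 + bval n k"
  proof
    fix xs assume "xs \<in> set ?blocks"
    then obtain e where "xs = block n k i j e" "length (block n k i j e) = ?L" using len by auto
    then show "card {y. ?F \<le> y \<and> y < ?L \<and> xs ! y} \<le> 2 + bval n k"
      using card_block_tail[of n k i j e] by (simp add: length_front_tag mult.assoc)
  qed
  have L: "?L = n * k * ?M + (n * k + Nval k * bval n k)"
    unfolding Lval_def by (simp add: algebra_simps)
  then have "?F \<le> ?L" by simp
  have w_nth: "?w ! x = concat ?blocks ! (p + x)" if "x < ?L" for x
    using that p unfolding choice_def by simp
  have t_nth: "template n k ! x = tag_bit ?M x" if "x < ?F" for x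
    using that by (simp add: template_def nth_append length_front_tag nth_front_tag mult.assoc)
  have "2 * dval n k + 1 \<le> card {x. x < ?F \<and> concat ?blocks ! (p + x) \<noteq> tag_bit ?M x}"
    using p unfolding choice_def
    by (intro misaligned_substring_mismatches[OF refl L construction_bounds[OF assms(1,2)]
          len tag sparse])
  also have "\<dots> = card {x. x < ?F \<and> ?w ! x \<noteq> template n k ! x}"
    using w_nth t_nth \<open>?F \<le> ?L\<close> by (intro arg_cong[where f = card] Collect_cong) auto
  also have "\<dots> \<le> hamming ?w (template n k)"
    using p \<open>?F \<le> ?L\<close> by (intro card_mismatches_le_hamming) simp
  finally show ?thesis by simp
qed

lemma choice_match_is_block:
  fixes E :: "(nat \<times> nat) list"
  assumes "2 \<le> n" "3 \<le> k"
    and E: "\<forall>(r, q) \<in> set E. 1 \<le> r \<and> r < q \<and> q \<le> n"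
    and s: "length s = Lval n k" "hamming (template n k) s \<le> dval n k"
    and ij: "1 \<le> i" "i < j" "j \<le> k"
    and w: "w \<in> substrs (Lval n k) (choice n k E i j)" "hamming w s \<le> dval n k"
  shows "\<exists>e \<in> set E. w = block n k i j e"
proof -
  let ?L = "Lval n k"
  note len = length_choice_blocks[OF E ij]
  obtain p where w_eq: "w = take ?L (drop p (choice n k E i j))"
    and p: "p + ?L \<le> length (choice n k E i j)"
    using w(1) unfolding substrs_def by auto
  have "hamming w (template n k) \<le> hamming w s + hamming s (template n k)"
    using hamming_triangle[of w s "template n k"] w(1) s(1)
    by (simp add: length_substrs length_template)
  also have "\<dots> \<le> 2 * dval n k"
    using w(2) s hamming_sym[of s "template n k"] by (simp add: length_template)
  finally have "p mod ?L = 0"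
    using misaligned_choice_substring_far[OF assms(1,2) len p] unfolding w_eq by linarith
  then have "p = p div ?L * ?L" using div_mult_mod_eq[of p ?L] by simp
  then obtain q where q: "p = q * ?L" by blast
  have "0 < ?L" using assms(1,2) by (simp add: Lval_def)
  moreover have "Suc q * ?L \<le> length E * ?L"
    using p length_concat_equal_length[OF len] unfolding q choice_def by simp
  ultimately have "q < length E" by (metis Suc_le_eq mult_le_cancel2 not_gr0)
  then have "w = block n k i j (E ! q)"
    unfolding w_eq q choice_def by (simp add: take_drop_concat_equal_length[OF len])
  then show ?thesis using \<open>q < length E\<close> by auto
qed

lemma choice_match_imp_two_le:
  assumes "\<forall>(r, q) \<in> set E. 1 \<le> r \<and> r < q \<and> q \<le> n" "0 < l" "w \<in> substrs l (choice n k E i j)"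
  shows "2 \<le> n"
proof -
  have "E \<noteq> []" using assms(2,3) by (auto simp: choice_def substrs_def)
  then have "last E \<in> set E" by simp
  moreover obtain r q where "last E = (r, q)" by (cases "last E")
  ultimately show ?thesis using assms(1) by fastforce
qed

lemma solution_prefix_front_tag:
  assumes "2 \<le> n" "1 \<le> i" "i < j" "j \<le> k" "1 \<le> r" "r < q" "q \<le> n"
    and s: "length s = Lval n k" "hamming (template n k) s \<le> dval n k"
      "hamming (block n k i j (r, q)) s \<le> dval n k"
  shows "prefix (front_tag n k) s"
proof (rule prefix_nthI)
  let ?t = "template n k" and ?b = "block n k i j (r, q)"
  have lens: "length ?t = length s" "length s = length ?b"
    using s(1) length_template length_block[OF assms(2-7)] by simp_all
  show "length (front_tag n k) \<le> length s"
    using s(1) unfolding Lval_def by (simp add: length_front_tag algebra_simps)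
  fix x assume x: "x < length (front_tag n k)"
  have "hamming ?t s + hamming s ?b \<le> hamming ?t ?b"
    using s(2,3) hamming_sym[OF lens(2)] hamming_template_block[OF assms(1-7)] by simp
  moreover have "?t ! x = ?b ! x" "?t ! x = front_tag n k ! x"
    using x by (simp_all add: template_def nth_append nth_block_front nth_front_tag)
  moreover have "x < length ?t" using x unfolding template_def by simp
  ultimately show "s ! x = front_tag n k ! x"
    using hamming_between_agrees[OF lens] by metis
qed

theorem lemma3:
  fixes n k :: nat and E :: "(nat \<times> nat) list" and s :: "bool list"
  assumes "k \<ge> 3"
    and "distinct E"
    and "\<forall>(r, q) \<in> set E. 1 \<le> r \<and> r < q \<and> q \<le> n"
    and "length s = Lval n k"
    and "\<exists>w \<in> substrs (Lval n k) (template n k). hamming w s \<le> dval n k"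
    and "\<forall>i j. 1 \<le> i \<and> i < j \<and> j \<le> k \<longrightarrow>
           (\<exists>w \<in> substrs (Lval n k) (choice n k E i j). hamming w s \<le> dval n k)"
  shows "prefix (front_tag n k) s \<and>
    (\<forall>w \<in> substrs (Lval n k) (template n k). hamming w s \<le> dval n k \<longrightarrow> prefix (front_tag n k) w) \<and>
    (\<forall>i j. 1 \<le> i \<and> i < j \<and> j \<le> k \<longrightarrow>
       (\<forall>w \<in> substrs (Lval n k) (choice n k E i j). hamming w s \<le> dval n k \<longrightarrow> prefix (front_tag n k) w))"
proof (cases "n = 0")
  case True
  then show ?thesis by (simp add: front_tag_def)
next
  case False
  have template_only: "substrs (Lval n k) (template n k) = {template n k}"
    using substrs_length_self[of "template n k"] by (simp add: length_template)
  with assms(5) have ts: "hamming (template n k) s \<le> dval n k" by simp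
  obtain w0 where w0: "w0 \<in> substrs (Lval n k) (choice n k E 1 2)" "hamming w0 s \<le> dval n k"
    using assms(6)[rule_format, of 1 2] assms(1) by auto
  have n2: "2 \<le> n"
    using choice_match_imp_two_le[OF assms(3) _ w0(1)] False assms(1) by (simp add: Lval_def)
  note match_is_block = choice_match_is_block[OF n2 assms(1,3,4) ts]
  obtain r q where "(r, q) \<in> set E" "w0 = block n k 1 2 (r, q)"
    using match_is_block[OF _ _ _ w0] assms(1) unfolding Bex_def split_paired_Ex by auto
  then have "prefix (front_tag n k) s"
    using solution_prefix_front_tag[OF n2 _ _ _ _ _ _ assms(4) ts, where i = 1 and j = 2]
      assms(1,3) w0(2) by auto
  moreover have "prefix (front_tag n k) w"
    if "1 \<le> i \<and> i < j \<and> j \<le> k" "w \<in> substrs (Lval n k) (choice n k E i j)" "hamming w s \<le> dval n k"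
    for i j w
    using match_is_block[of i j w] that unfolding block_def by auto
  moreover have "prefix (front_tag n k) (template n k)" by (simp add: template_def)
  ultimately show ?thesis unfolding template_only by blast
qed

end
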